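(* (Soundness.) For every finite multiset $\Gamma$ of formulae of intuitionistic linear logic and every formula $\varphi$: if $\Gamma \vdash \varphi$ is derivable in the natural deduction system $\mathrm{N_{ILL}}$, then the sequent $(\Gamma:\varphi)$ is valid, i.e. $\Gamma \Vdash^{\varnothing}_{\mathcal{B}} \varphi$ for every base $\mathcal{B}$.
   Context: Fix a set $\mathbb{A}$ of propositional atoms. ILL formulae: $\phi ::= p\in\mathbb{A} \mid \top \mid 0 \mid 1 \mid \phi\multimap\phi \mid \phi\otimes\phi \mid \phi\,\&\,\phi \mid \phi\oplus\phi \mid\ !\phi$. All multisets are finite; "$\Gamma,\Delta$" denotes multiset union. Natural deduction $\mathrm{N_{ILL}}$: $\Gamma\vdash\varphi$ is defined inductively by: (Ax) $\varphi\vdash\varphi$; ($\multimap$I) from $\Gamma,\phi\vdash\psi$ infer $\Gamma\vdash\phi\multimap\psi$; ($\multimap$E) from $\Gamma\vdash\phi\multimap\psi$ and $\Delta\vdash\phi$ infer $\Gamma,\Delta\vdash\psi$; ($\otimes$I) from $\Gamma\vdash\phi$, $\Delta\vdash\psi$ infer $\Gamma,\Delta\vdash\phi\otimes\psi$; ($\otimes$E) from $\Gamma\vdash\phi\otimes\psi$ and $\Delta,\phi,\psi\vdash\chi$ infer $\Gamma,\Delta\vdash\chi$; ($1$I) $\vdash 1$; ($1$E) from $\Gamma\vdash 1$, $\Delta\vdash\phi$ infer $\Gamma,\Delta\vdash\phi$; ($\&$I) from $\Gamma\vdash\phi$, $\Gamma\vdash\psi$ infer $\Gamma\vdash\phi\&\psi$;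 ($\&$E) from $\Gamma\vdash\phi\&\psi$ infer $\Gamma\vdash\phi$ and infer $\Gamma\vdash\psi$; ($\oplus$I) from $\Gamma\vdash\phi$ (or $\Gamma\vdash\psi$) infer $\Gamma\vdash\phi\oplus\psi$; ($\oplus$E) from $\Gamma\vdash\phi\oplus\psi$, $\Delta,\phi\vdash\chi$, $\Delta,\psi\vdash\chi$ infer $\Gamma,\Delta\vdash\chi$; ($\top$I) for $n\ge0$, from $\Gamma_i\vdash\phi_i$ ($i=1..n$) infer $\Gamma_1,\dots,\Gamma_n\vdash\top$; ($0$E) for $n\ge 0$, from $\Gamma_i\vdash\phi_i$ ($i=1..n$) and $\Delta\vdash 0$ infer $\Gamma_1,\dots,\Gamma_n,\Delta\vdash\chi$; (Prom$_n$) for $n\ge0$, from $\Gamma_i\vdash\,!\psi_i$ ($i=1..n$) and $!\psi_1,\dots,!\psi_n\vdash\phi$ infer $\Gamma_1,\dots,\Gamma_n\vdash\,!\phi$; (Der) from $\Gamma\vdash\,!\phi$, $\Delta,\phi\vdash\psi$ infer $\Gamma,\Delta\vdash\psi$; (Wk) from $\Gamma\vdash\,!\phi$, $\Delta\vdash\psi$ infer $\Gamma,\Delta\vdash\psi$; (Ctr) from $\Gamma\vdash\,!\phi$, $\Delta,!\phi,!\phi\vdash\psi$ infer $\Gamma,\Delta\vdash\psi$. Atomic rules and bases: an atomic sequent is $P\Rightarrow p$ with $P$ a multiset of atoms, $p$ an atom. An atomic box is a multiset of atomic sequents. An atomic rule is a triple $\langle\mathbf{A},\mathbf{S},p\rangle$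 with $\mathbf{A}$ a multiset of atomic boxes, $\mathbf{S}$ an atomic box, $p$ an atom. A base is a set of atomic rules. An atom $p$ is persistent in $\mathcal{B}$ if some $\langle\varnothing,\mathbf{S},p\rangle\in\mathcal{B}$ has $\mathbf{S}\neq\varnothing$. Derivability $\vdash_{\mathcal{B}}$ between atomic multisets and atoms is defined inductively: (Ref) $p\vdash_{\mathcal{B}}p$; (App) if $\langle\mathbf{A},\mathbf{S},p\rangle\in\mathcal{B}$ with $\mathbf{A}=\{\mathbf{T}_1,\dots,\mathbf{T}_m\}$, and there are atomic multisets $C_1,\dots,C_n$ ($n\ge m$) and a multiset $D=\{d_{m+1},\dots,d_n\}$ of atoms persistent in $\mathcal{B}$ such that $C_i,Q\vdash_{\mathcal{B}}q$ for every $i\le m$ and every $Q\Rightarrow q\in\mathbf{T}_i$, $C_j\vdash_{\mathcal{B}}d_j$ for every $m<j\le n$, and $D,U\vdash_{\mathcal{B}}v$ for every $U\Rightarrow v\in\mathbf{S}$, then $C_1,\dots,C_n\vdash_{\mathcal{B}}p$. Support $\Vdash^L_{\mathcal{B}}$ (base $\mathcal{B}$, atomic multiset $L$), defined by induction on formulae: $\Vdash^L_{\mathcal{B}}p$ iff $L\vdash_{\mathcal{B}}p$; $\Vdash^L_{\mathcal{B}}\varphi\multimap\psi$ iff $\varphi\Vdash^L_{\mathcal{B}}\psi$; $\Vdash^L_{\mathcal{B}}\varphi\otimes\psi$ iff for all $\mathcal{C}\supseteq\mathcal{B}$, atomic multisets $K$, atoms $p$: if $\varphi,\psi\Vdash^K_{\mathcal{C}}p$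 then $\Vdash^{L,K}_{\mathcal{C}}p$; $\Vdash^L_{\mathcal{B}}1$ iff for all $\mathcal{C}\supseteq\mathcal{B}$, $K$, $p$: if $\Vdash^K_{\mathcal{C}}p$ then $\Vdash^{L,K}_{\mathcal{C}}p$; $\Vdash^L_{\mathcal{B}}\varphi\&\psi$ iff $\Vdash^L_{\mathcal{B}}\varphi$ and $\Vdash^L_{\mathcal{B}}\psi$; $\Vdash^L_{\mathcal{B}}\varphi\oplus\psi$ iff for all $\mathcal{C}\supseteq\mathcal{B}$, $K$, $p$: if $\varphi\Vdash^K_{\mathcal{C}}p$ and $\psi\Vdash^K_{\mathcal{C}}p$ then $\Vdash^{L,K}_{\mathcal{C}}p$; $\Vdash^L_{\mathcal{B}}0$ iff $\Vdash^{L,K}_{\mathcal{B}}p$ for all atoms $p$ and atomic multisets $K$; $\Vdash^L_{\mathcal{B}}\top$ always; $\Vdash^L_{\mathcal{B}}!\varphi$ iff for all $\mathcal{C}\supseteq\mathcal{B}$, $K$, $p$: if (for all $\mathcal{D}\supseteq\mathcal{C}$, $\Vdash^{\varnothing}_{\mathcal{D}}\varphi$ implies $\Vdash^K_{\mathcal{D}}p$) then $\Vdash^{L,K}_{\mathcal{C}}p$. For nonempty multisets: $\Vdash^L_{\mathcal{B}}\Gamma,\Delta$ iff $L=K,M$ for some $K,M$ with $\Vdash^K_{\mathcal{B}}\Gamma$ and $\Vdash^M_{\mathcal{B}}\Delta$. For a nonempty antecedent written as $!\Delta,\Theta$, where $!\Delta$ collects the formulae whose top-level connective is $!$ (with $\Delta$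 the formulae under those $!$) and $\Theta$ contains none: $!\Delta,\Theta\Vdash^L_{\mathcal{B}}\varphi$ iff for all $\mathcal{C}\supseteq\mathcal{B}$ and atomic $K$, if $\Vdash^{\varnothing}_{\mathcal{C}}\delta$ for every $\delta\in\Delta$ and $\Vdash^K_{\mathcal{C}}\Theta$ then $\Vdash^{L,K}_{\mathcal{C}}\varphi$ (when $\Theta$ is empty, $K$ is empty). An empty antecedent: $\varnothing\Vdash^L_{\mathcal{B}}\varphi$ means $\Vdash^L_{\mathcal{B}}\varphi$. A sequent $(\Gamma:\varphi)$ is valid, written $\Gamma\Vdash\varphi$, iff $\Gamma\Vdash^{\varnothing}_{\mathcal{B}}\varphi$ for all bases $\mathcal{B}$. *)

theory Defs
  imports "HOL-Library.Multiset"
begin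

datatype 'a form =
    Atom 'a
  | Top
  | Zero
  | One
  | Lolli "'a form" "'a form"
  | Tensor "'a form" "'a form"
  | With "'a form" "'a form"
  | Plus "'a form" "'a form"
  | Bang "'a form"

inductive nd :: "'a form multiset \<Rightarrow> 'a form \<Rightarrow> bool" where
  Ax: "nd {#\<phi>#} \<phi>"
| LolliI: "nd (\<Gamma> + {#\<phi>#}) \<psi> \<Longrightarrow> nd \<Gamma> (Lolli \<phi> \<psi>)"
| LolliE: "nd \<Gamma> (Lolli \<phi> \<psi>) \<Longrightarrow> nd \<Delta> \<phi> \<Longrightarrow> nd (\<Gamma> + \<Delta>) \<psi>"
| TensorI: "nd \<Gamma> \<phi> \<Longrightarrow> nd \<Delta> \<psi> \<Longrightarrow> nd (\<Gamma> + \<Delta>) (Tensor \<phi> \<psi>)"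
| TensorE: "nd \<Gamma> (Tensor \<phi> \<psi>) \<Longrightarrow> nd (\<Delta> + {#\<phi>, \<psi>#}) \<chi> \<Longrightarrow> nd (\<Gamma> + \<Delta>) \<chi>"
| OneI: "nd {#} One"
| OneE: "nd \<Gamma> One \<Longrightarrow> nd \<Delta> \<phi> \<Longrightarrow> nd (\<Gamma> + \<Delta>) \<phi>"
| WithI: "nd \<Gamma> \<phi> \<Longrightarrow> nd \<Gamma> \<psi> \<Longrightarrow> nd \<Gamma> (With \<phi> \<psi>)"
| WithE1: "nd \<Gamma> (With \<phi> \<psi>) \<Longrightarrow> nd \<Gamma> \<phi>"
| WithE2: "nd \<Gamma> (With \<phi> \<psi>) \<Longrightarrow> nd \<Gamma> \<psi>"
| PlusI1: "nd \<Gamma> \<phi> \<Longrightarrow> nd \<Gamma> (Plus \<phi> \<psi>)"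
| PlusI2: "nd \<Gamma> \<psi> \<Longrightarrow> nd \<Gamma> (Plus \<phi> \<psi>)"
| PlusE: "nd \<Gamma> (Plus \<phi> \<psi>) \<Longrightarrow> nd (\<Delta> + {#\<phi>#}) \<chi> \<Longrightarrow> nd (\<Delta> + {#\<psi>#}) \<chi>
           \<Longrightarrow> nd (\<Gamma> + \<Delta>) \<chi>"
| TopI: "(\<And>i. i < length ps \<Longrightarrow> nd (fst (ps ! i)) (snd (ps ! i)))
           \<Longrightarrow> nd (sum_list (map fst ps)) Top"
| ZeroE: "(\<And>i. i < length ps \<Longrightarrow> nd (fst (ps ! i)) (snd (ps ! i)))
           \<Longrightarrow> nd \<Delta> Zero \<Longrightarrow> nd (sum_list (map fst ps) + \<Delta>) \<chi>"
| Prom: "(\<And>i. i < length ps \<Longrightarrow> nd (fst (ps ! i)) (Bang (snd (ps ! i))))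
           \<Longrightarrow> nd (mset (map (\<lambda>x. Bang (snd x)) ps)) \<phi>
           \<Longrightarrow> nd (sum_list (map fst ps)) (Bang \<phi>)"
| Der: "nd \<Gamma> (Bang \<phi>) \<Longrightarrow> nd (\<Delta> + {#\<phi>#}) \<psi> \<Longrightarrow> nd (\<Gamma> + \<Delta>) \<psi>"
| Wk: "nd \<Gamma> (Bang \<phi>) \<Longrightarrow> nd \<Delta> \<psi> \<Longrightarrow> nd (\<Gamma> + \<Delta>) \<psi>"
| Ctr: "nd \<Gamma> (Bang \<phi>) \<Longrightarrow> nd (\<Delta> + {#Bang \<phi>, Bang \<phi>#}) \<psi> \<Longrightarrow> nd (\<Gamma> + \<Delta>) \<psi>"

type_synonym 'a aseq = "'a multiset \<times> 'a"            (* P => p *)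
type_synonym 'a abox = "'a aseq multiset"
type_synonym 'a arule = "'a abox multiset \<times> 'a abox \<times> 'a"
type_synonym 'a base = "'a arule set"

definition persistent :: "'a base \<Rightarrow> 'a \<Rightarrow> bool" where
  "persistent B p \<longleftrightarrow> (\<exists>S. ({#}, S, p) \<in> B \<and> S \<noteq> {#})"

inductive deriv :: "'a base \<Rightarrow> 'a multiset \<Rightarrow> 'a \<Rightarrow> bool" for B where
  Ref: "deriv B {#p#} p"
| App: "(A, S, p) \<in> B \<Longrightarrow> mset Ts = A \<Longrightarrow> length Cs = length Ts + length ds
        \<Longrightarrow> (\<And>d. d \<in> set ds \<Longrightarrow> persistent B d)
        \<Longrightarrow> (\<And>i Q q. i < length Ts \<Longrightarrow> (Q, q) \<in># Ts ! i \<Longrightarrow> deriv B (Cs ! i + Q) q)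
        \<Longrightarrow> (\<And>j. j < length ds \<Longrightarrow> deriv B (Cs ! (length Ts + j)) (ds ! j))
        \<Longrightarrow> (\<And>U v. (U, v) \<in># S \<Longrightarrow> deriv B (mset ds + U) v)
        \<Longrightarrow> deriv B (sum_list Cs) p"

definition is_bang :: "'a form \<Rightarrow> bool" where
  "is_bang \<phi> \<longleftrightarrow> (\<exists>\<delta>. \<phi> = Bang \<delta>)"

definition msupp :: "('a base \<Rightarrow> 'a multiset \<Rightarrow> 'a form \<Rightarrow> bool) \<Rightarrow> 'a base
     \<Rightarrow> 'a multiset \<Rightarrow> 'a form multiset \<Rightarrow> bool" where
  "msupp S B L \<Theta> \<longleftrightarrow> (\<exists>xs Ks. mset xs = \<Theta> \<and> length Ks = length xs \<and> L = sum_list Ks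
      \<and> (\<forall>i < length xs. S B (Ks ! i) (xs ! i)))"

definition hyps :: "('a base \<Rightarrow> 'a multiset \<Rightarrow> 'a form \<Rightarrow> bool) \<Rightarrow> 'a base
     \<Rightarrow> 'a multiset \<Rightarrow> 'a form multiset \<Rightarrow> bool" where
  "hyps S C K \<Gamma> \<longleftrightarrow> (\<forall>\<delta>. Bang \<delta> \<in># \<Gamma> \<longrightarrow> S C {#} \<delta>)
      \<and> msupp S C K (filter_mset (\<lambda>x. \<not> is_bang x) \<Gamma>)"

definition ante :: "('a base \<Rightarrow> 'a multiset \<Rightarrow> 'a form \<Rightarrow> bool) \<Rightarrow> 'a base
     \<Rightarrow> 'a multiset \<Rightarrow> 'a form multiset \<Rightarrow> ('a base \<Rightarrow> 'a multiset \<Rightarrow> bool) \<Rightarrow> bool" where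
  "ante S B L \<Gamma> Q \<longleftrightarrow> (if \<Gamma> = {#} then Q B L
      else (\<forall>C K. B \<subseteq> C \<longrightarrow> hyps S C K \<Gamma> \<longrightarrow> Q C (L + K)))"

lemma msupp_cong [fundef_cong]:
  "B = B' \<Longrightarrow> L = L' \<Longrightarrow> \<Theta> = \<Theta>' \<Longrightarrow> (\<And>M x. x \<in># \<Theta>' \<Longrightarrow> S B' M x = S' B' M x)
   \<Longrightarrow> msupp S B L \<Theta> = msupp S' B' L' \<Theta>'"
  unfolding msupp_def
  by (smt (verit, best) nth_mem set_mset_mset)

lemma hyps_cong [fundef_cong]:
  "C = C' \<Longrightarrow> K = K' \<Longrightarrow> \<Gamma> = \<Gamma>'
   \<Longrightarrow> (\<And>M x. x \<in># \<Gamma>' \<Longrightarrow> S C' M x = S' C' M x)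
   \<Longrightarrow> (\<And>\<delta>. Bang \<delta> \<in># \<Gamma>' \<Longrightarrow> S C' {#} \<delta> = S' C' {#} \<delta>)
   \<Longrightarrow> hyps S C K \<Gamma> = hyps S' C' K' \<Gamma>'"
  unfolding hyps_def
  apply (rule conj_cong)
   apply blast
  apply (rule msupp_cong)
     apply auto
  done

lemma ante_cong [fundef_cong]:
  "B = B' \<Longrightarrow> L = L' \<Longrightarrow> \<Gamma> = \<Gamma>'
   \<Longrightarrow> (\<And>C M x. x \<in># \<Gamma>' \<Longrightarrow> S C M x = S' C M x)
   \<Longrightarrow> (\<And>C \<delta>. Bang \<delta> \<in># \<Gamma>' \<Longrightarrow> S C {#} \<delta> = S' C {#} \<delta>)
   \<Longrightarrow> (\<And>C M. Q C M = Q' C M)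
   \<Longrightarrow> ante S B L \<Gamma> Q = ante S' B' L' \<Gamma>' Q'"
  unfolding ante_def
  by (simp cong: hyps_cong)

fun supp :: "'a base \<Rightarrow> 'a multiset \<Rightarrow> 'a form \<Rightarrow> bool" where
  "supp B L (Atom p) \<longleftrightarrow> deriv B L p"
| "supp B L (Lolli \<phi> \<psi>) \<longleftrightarrow> ante supp B L {#\<phi>#} (\<lambda>C M. supp C M \<psi>)"
| "supp B L (Tensor \<phi> \<psi>) \<longleftrightarrow> (\<forall>C K p. B \<subseteq> C \<longrightarrow>
      ante supp C K {#\<phi>, \<psi>#} (\<lambda>D M. deriv D M p) \<longrightarrow> deriv C (L + K) p)"
| "supp B L One \<longleftrightarrow> (\<forall>C K p. B \<subseteq> C \<longrightarrow> deriv C K p \<longrightarrow> deriv C (L + K) p)"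
| "supp B L (With \<phi> \<psi>) \<longleftrightarrow> supp B L \<phi> \<and> supp B L \<psi>"
| "supp B L (Plus \<phi> \<psi>) \<longleftrightarrow> (\<forall>C K p. B \<subseteq> C \<longrightarrow>
      ante supp C K {#\<phi>#} (\<lambda>D M. deriv D M p) \<longrightarrow>
      ante supp C K {#\<psi>#} (\<lambda>D M. deriv D M p) \<longrightarrow> deriv C (L + K) p)"
| "supp B L Zero \<longleftrightarrow> (\<forall>p K. deriv B (L + K) p)"
| "supp B L Top \<longleftrightarrow> True"
| "supp B L (Bang \<phi>) \<longleftrightarrow> (\<forall>C K p. B \<subseteq> C \<longrightarrow>
      (\<forall>D. C \<subseteq> D \<longrightarrow> supp D {#} \<phi> \<longrightarrow> deriv D K p) \<longrightarrow> deriv C (L + K) p)"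

definition ante_supp :: "'a base \<Rightarrow> 'a multiset \<Rightarrow> 'a form multiset \<Rightarrow> 'a form \<Rightarrow> bool" where
  "ante_supp B L \<Gamma> \<phi> \<longleftrightarrow> ante supp B L \<Gamma> (\<lambda>C M. supp C M \<phi>)"

definition valid :: "'a form multiset \<Rightarrow> 'a form \<Rightarrow> bool" where
  "valid \<Gamma> \<phi> \<longleftrightarrow> (\<forall>B. ante_supp B {#} \<Gamma> \<phi>)"

end

theory Submission
  imports Defs
begin

text \<open>Soundness is proved by induction on derivations, for the semantic consequence
  relation that quantifies over all bases and all atomic contexts supporting the antecedent.
  The support clauses of \<open>\<otimes>\<close>, \<open>\<oplus>\<close>, \<open>1\<close>, \<open>0\<close> and \<open>!\<close> are elimination clauses:
  they only say which atoms the supporting context derives together with contexts that derive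
  those atoms under the antecedents of the minor premises. The central lemma is that such a
  clause eliminates into arbitrary conclusions, not just atoms; by induction on the conclusion,
  the five positive connectives reduce to composing two elimination clauses, while \<open>\<multimap>\<close>
  and \<open>&\<close> are handled pointwise. Each elimination rule of the calculus is an instance of this
  lemma, and so is cut on a \<open>!\<close>-formula, the one kind of formula whose support cannot be
  moved into the context; cut in turn gives \<open>\<multimap>\<close>E and the introduction rules.\<close>

lemma deriv_mono: "deriv B L p \<Longrightarrow> B \<subseteq> C \<Longrightarrow> deriv C L p"
proof (induction rule: deriv.induct)
  case (Ref p)
  show ?case by (rule deriv.Ref)
next
  case (App A S p Ts Cs ds)
  then show ?case
    by (intro deriv.App[of A S p C Ts Cs ds]) (auto simp: persistent_def, blast)
qed

lemma supp_mono: "supp B L \<phi> \<Longrightarrow> B \<subseteq> C \<Longrightarrow> supp C L \<phi>"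
  by (induction \<phi> arbitrary: B L C) (auto simp: ante_def intro: deriv_mono)

lemma msupp_iff_pairs:
  "msupp S B L \<Theta> \<longleftrightarrow>
     (\<exists>P. image_mset snd P = \<Theta> \<and> L = sum_mset (image_mset fst P) \<and> (\<forall>(K, x)\<in>#P. S B K x))"
proof
  assume "msupp S B L \<Theta>"
  then obtain xs Ks where "mset xs = \<Theta>" "length Ks = length xs" "L = sum_list Ks"
      "\<forall>i<length xs. S B (Ks ! i) (xs ! i)"
    unfolding msupp_def by blast
  then show "\<exists>P. image_mset snd P = \<Theta> \<and> L = sum_mset (image_mset fst P) \<and> (\<forall>(K, x)\<in>#P. S B K x)"
    by (intro exI[of _ "mset (zip Ks xs)"])
      (auto simp flip: mset_map simp: sum_mset_sum_list set_zip)
next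
  assume "\<exists>P. image_mset snd P = \<Theta> \<and> L = sum_mset (image_mset fst P) \<and> (\<forall>(K, x)\<in>#P. S B K x)"
  then obtain P where P: "image_mset snd P = \<Theta>" "L = sum_mset (image_mset fst P)" "\<forall>(K, x)\<in>#P. S B K x"
    by blast
  obtain ys where "mset ys = P" using ex_mset by blast
  with P show "msupp S B L \<Theta>"
    unfolding msupp_def
    by (intro exI[of _ "map snd ys"] exI[of _ "map fst ys"])
      (auto simp: sum_mset_sum_list simp flip: mset_map dest!: nth_mem)
qed

lemma msupp_empty [simp]: "msupp S B L {#} \<longleftrightarrow> L = {#}"
  by (simp add: msupp_iff_pairs)

lemma msupp_single [simp]: "msupp S B L {#x#} \<longleftrightarrow> S B L x"
proof
  assume "msupp S B L {#x#}"
  then obtain P where "image_mset snd P = {#x#}" "L = sum_mset (image_mset fst P)" "\<forall>(K, x)\<in>#P. S B K x"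
    by (auto simp: msupp_iff_pairs)
  then show "S B L x" by (auto dest!: msed_map_invR)
qed (auto simp: msupp_iff_pairs intro!: exI[of _ "{#(L, x)#}"])

lemma msupp_union:
  "msupp S B L (\<Gamma> + \<Delta>) \<longleftrightarrow> (\<exists>L1 L2. L = L1 + L2 \<and> msupp S B L1 \<Gamma> \<and> msupp S B L2 \<Delta>)"
proof
  assume "msupp S B L (\<Gamma> + \<Delta>)"
  then obtain P where P: "image_mset snd P = \<Gamma> + \<Delta>" "L = sum_mset (image_mset fst P)"
      "\<forall>(K, x)\<in>#P. S B K x"
    by (auto simp: msupp_iff_pairs)
  from image_mset_eq_plusD[OF P(1)] obtain P1 P2
    where "P = P1 + P2" "\<Gamma> = image_mset snd P1" "\<Delta> = image_mset snd P2"
    by blast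
  moreover from calculation P have "msupp S B (sum_mset (image_mset fst P1)) \<Gamma>"
    unfolding msupp_iff_pairs by (auto intro!: exI[of _ P1])
  moreover from calculation P have "msupp S B (sum_mset (image_mset fst P2)) \<Delta>"
    unfolding msupp_iff_pairs by (auto intro!: exI[of _ P2])
  ultimately show "\<exists>L1 L2. L = L1 + L2 \<and> msupp S B L1 \<Gamma> \<and> msupp S B L2 \<Delta>"
    using P(2) by auto
next
  assume "\<exists>L1 L2. L = L1 + L2 \<and> msupp S B L1 \<Gamma> \<and> msupp S B L2 \<Delta>"
  then obtain P1 P2 where "image_mset snd P1 = \<Gamma>" "image_mset snd P2 = \<Delta>"
      "L = sum_mset (image_mset fst P1) + sum_mset (image_mset fst P2)"
      "\<forall>(K, x)\<in>#P1. S B K x" "\<forall>(K, x)\<in>#P2. S B K x"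
    unfolding msupp_iff_pairs by blast
  then show "msupp S B L (\<Gamma> + \<Delta>)"
    unfolding msupp_iff_pairs by (intro exI[of _ "P1 + P2"]) auto
qed

lemma msupp_add_mset:
  "msupp S B L (add_mset x \<Theta>) \<longleftrightarrow> (\<exists>L1 L2. L = L1 + L2 \<and> S B L1 x \<and> msupp S B L2 \<Theta>)"
  using msupp_union[of S B L "{#x#}" \<Theta>] by simp

lemma msupp_mono: "msupp S B L \<Theta> \<Longrightarrow> (\<And>K x. S B K x \<Longrightarrow> S' B' K x) \<Longrightarrow> msupp S' B' L \<Theta>"
  unfolding msupp_def by blast

lemma msupp_supp_mono: "msupp supp B L \<Theta> \<Longrightarrow> B \<subseteq> C \<Longrightarrow> msupp supp C L \<Theta>"
  using msupp_mono supp_mono by metis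

lemma hyps_empty [simp]: "hyps S C K {#} \<longleftrightarrow> K = {#}"
  by (simp add: hyps_def)

lemma hyps_add_mset_Bang [simp]:
  "hyps S C K (add_mset (Bang d) \<Gamma>) \<longleftrightarrow> S C {#} d \<and> hyps S C K \<Gamma>"
  by (auto simp: hyps_def is_bang_def)

lemma hyps_add_mset_nonbang:
  "\<not> is_bang x \<Longrightarrow>
    hyps S C K (add_mset x \<Gamma>) \<longleftrightarrow> (\<exists>K1 K2. K = K1 + K2 \<and> S C K1 x \<and> hyps S C K2 \<Gamma>)"
  by (auto simp: hyps_def msupp_add_mset is_bang_def)

lemma hyps_union:
  "hyps S C K (\<Gamma> + \<Delta>) \<longleftrightarrow> (\<exists>K1 K2. K = K1 + K2 \<and> hyps S C K1 \<Gamma> \<and> hyps S C K2 \<Delta>)"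
  by (auto simp: hyps_def msupp_union)

lemma hyps_image_Bang: "hyps S C K (image_mset Bang \<Delta>) \<longleftrightarrow> K = {#} \<and> (\<forall>d\<in>#\<Delta>. S C {#} d)"
  by (induction \<Delta>) auto

lemma hyps_mono: "hyps supp C K \<Gamma> \<Longrightarrow> C \<subseteq> D \<Longrightarrow> hyps supp D K \<Gamma>"
  unfolding hyps_def using supp_mono msupp_supp_mono by metis

text \<open>\<^const>\<open>ante\<close> without its special case for the empty antecedent
  (cf. \<open>seq_supp_empty\<close>).\<close>
definition seq_supp :: "'a base \<Rightarrow> 'a multiset \<Rightarrow> 'a form multiset \<Rightarrow> 'a form \<Rightarrow> bool" where
  "seq_supp C K \<Gamma> \<chi> \<longleftrightarrow> (\<forall>D M. C \<subseteq> D \<longrightarrow> hyps supp D M \<Gamma> \<longrightarrow> supp D (K + M) \<chi>)"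

text \<open>The support clauses of \<open>\<otimes>\<close>, \<open>\<oplus>\<close>, \<open>1\<close>, \<open>0\<close> and \<open>!\<close> all have this shape, with
  \<open>Gs\<close> the antecedents discharged by the minor premises of the elimination rule.\<close>
definition elim_supp :: "'a form multiset set \<Rightarrow> 'a base \<Rightarrow> 'a multiset \<Rightarrow> bool" where
  "elim_supp Gs B L \<longleftrightarrow>
    (\<forall>C K p. B \<subseteq> C \<longrightarrow> (\<forall>G\<in>Gs. seq_supp C K G (Atom p)) \<longrightarrow> deriv C (L + K) p)"

lemma seq_supp_mono: "seq_supp C K \<Gamma> \<chi> \<Longrightarrow> C \<subseteq> D \<Longrightarrow> seq_supp D K \<Gamma> \<chi>"
  by (auto simp: seq_supp_def)

lemma seq_supp_empty [simp]: "seq_supp C K {#} \<chi> \<longleftrightarrow> supp C K \<chi>"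
  by (auto simp: seq_supp_def intro: supp_mono)

lemma seq_supp_With: "seq_supp C K \<Gamma> (With a b) \<longleftrightarrow> seq_supp C K \<Gamma> a \<and> seq_supp C K \<Gamma> b"
  by (auto simp: seq_supp_def)

lemma elim_supp_mono: "elim_supp Gs B L \<Longrightarrow> B \<subseteq> C \<Longrightarrow> elim_supp Gs C L"
  by (auto simp: elim_supp_def)

lemma supp_Lolli: "supp B L (Lolli a b) \<longleftrightarrow> seq_supp B L {#a#} b"
  by (simp add: ante_def seq_supp_def)

lemma supp_Tensor: "supp B L (Tensor a b) \<longleftrightarrow> elim_supp {{#a, b#}} B L"
  by (simp add: ante_def seq_supp_def elim_supp_def)

lemma supp_Plus: "supp B L (Plus a b) \<longleftrightarrow> elim_supp {{#a#}, {#b#}} B L"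
  unfolding supp.simps ante_def seq_supp_def elim_supp_def by auto

lemma supp_One: "supp B L One \<longleftrightarrow> elim_supp {{#}} B L"
  by (simp add: elim_supp_def)

lemma supp_Zero: "supp B L Zero \<longleftrightarrow> elim_supp {} B L"
  by (auto simp: elim_supp_def intro: deriv_mono)

lemma supp_Bang: "supp B L (Bang a) \<longleftrightarrow> elim_supp {{#Bang a#}} B L"
  by (simp add: seq_supp_def elim_supp_def)

declare supp.simps(2-4,6,7,9) [simp del]

lemma elim_supp_compose:
  assumes major: "elim_supp Gs C L" and minor: "\<forall>G\<in>Gs. seq_supp C K G \<chi>"
    and \<chi>: "\<And>B M. supp B M \<chi> \<longleftrightarrow> elim_supp Hs B M"
  shows "elim_supp Hs C (L + K)"
  unfolding elim_supp_def
proof (intro allI impI)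
  fix E N p
  assume "C \<subseteq> E" and minor': "\<forall>H\<in>Hs. seq_supp E N H (Atom p)"
  have "\<forall>G\<in>Gs. seq_supp E (K + N) G (Atom p)"
    unfolding seq_supp_def
  proof (intro ballI allI impI)
    fix G D M
    assume "G \<in> Gs" "E \<subseteq> D" "hyps supp D M G"
    with minor \<open>C \<subseteq> E\<close> have "elim_supp Hs D (K + M)"
      by (auto simp: seq_supp_def \<chi>)
    moreover have "\<forall>H\<in>Hs. seq_supp D N H (Atom p)"
      using minor' seq_supp_mono \<open>E \<subseteq> D\<close> by blast
    ultimately have "deriv D (K + M + N) p"
      unfolding elim_supp_def by blast
    then show "supp D (K + N + M) (Atom p)"
      by (simp add: ac_simps)
  qed
  with major \<open>C \<subseteq> E\<close> show "deriv E (L + K + N) p"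
    unfolding elim_supp_def by (metis add.assoc)
qed

lemma supp_elim: "elim_supp Gs C L \<Longrightarrow> \<forall>G\<in>Gs. seq_supp C K G \<chi> \<Longrightarrow> supp C (L + K) \<chi>"
proof (induction \<chi> arbitrary: C K)
  case (Atom p)
  then show ?case by (simp add: elim_supp_def)
next
  case Top
  show ?case by simp
next
  case Zero
  show ?case unfolding supp_Zero by (rule elim_supp_compose[OF Zero.prems supp_Zero])
next
  case One
  show ?case unfolding supp_One by (rule elim_supp_compose[OF One.prems supp_One])
next
  case (Lolli a b)
  show ?case
    unfolding supp_Lolli seq_supp_def
  proof (intro allI impI)
    fix E N
    assume "C \<subseteq> E" "hyps supp E N {#a#}"
    have "\<forall>G\<in>Gs. seq_supp E (K + N) G b"
      unfolding seq_supp_def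
    proof (intro ballI allI impI)
      fix G D M
      assume "G \<in> Gs" "E \<subseteq> D" "hyps supp D M G"
      with Lolli.prems(2) \<open>C \<subseteq> E\<close> have "supp D (K + M) (Lolli a b)"
        unfolding seq_supp_def by blast
      then have "seq_supp D (K + M) {#a#} b"
        by (simp only: supp_Lolli)
      moreover have "hyps supp D N {#a#}"
        using \<open>hyps supp E N {#a#}\<close> \<open>E \<subseteq> D\<close> by (rule hyps_mono)
      ultimately have "supp D (K + M + N) b"
        unfolding seq_supp_def by blast
      then show "supp D (K + N + M) b"
        by (simp add: ac_simps)
    qed
    with Lolli.IH(2) Lolli.prems(1) \<open>C \<subseteq> E\<close> have "supp E (L + (K + N)) b"
      by (blast intro: elim_supp_mono)
    then show "supp E (L + K + N) b"
      by (simp add: ac_simps)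
  qed
next
  case (Tensor a b)
  show ?case unfolding supp_Tensor by (rule elim_supp_compose[OF Tensor.prems supp_Tensor])
next
  case (With a b)
  then show ?case by (simp add: seq_supp_With)
next
  case (Plus a b)
  show ?case unfolding supp_Plus by (rule elim_supp_compose[OF Plus.prems supp_Plus])
next
  case (Bang a)
  show ?case unfolding supp_Bang by (rule elim_supp_compose[OF Bang.prems supp_Bang])
qed

lemma seq_supp_cut:
  assumes "seq_supp C K (add_mset a \<Gamma>) \<chi>" and "supp C L a"
  shows "seq_supp C (K + L) \<Gamma> \<chi>"
  unfolding seq_supp_def
proof (intro allI impI)
  fix D M
  assume "C \<subseteq> D" and hyps: "hyps supp D M \<Gamma>"
  have a: "supp D L a"
    using assms(2) \<open>C \<subseteq> D\<close> by (rule supp_mono)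
  show "supp D (K + L + M) \<chi>"
  proof (cases "is_bang a")
    case False
    with a hyps have "hyps supp D (L + M) (add_mset a \<Gamma>)"
      using hyps_add_mset_nonbang by blast
    with assms(1) \<open>C \<subseteq> D\<close> have "supp D (K + (L + M)) \<chi>"
      unfolding seq_supp_def by blast
    then show ?thesis
      by (simp add: ac_simps)
  next
    case True
    \<comment> \<open>the support of \<open>a\<close> cannot join the context; it is used through its elimination clause\<close>
    then obtain d where d: "a = Bang d"
      by (auto simp: is_bang_def)
    have "seq_supp D (K + M) {#Bang d#} \<chi>"
      using assms(1) \<open>C \<subseteq> D\<close> hyps d by (auto simp: seq_supp_def intro: hyps_mono)
    moreover from a d have "elim_supp {{#Bang d#}} D L"
      by (simp add: supp_Bang)
    ultimately have "supp D (L + (K + M)) \<chi>"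
      by (auto intro: supp_elim)
    then show ?thesis
      by (simp add: ac_simps)
  qed
qed

lemma seq_supp_cut_msupp:
  "seq_supp C K (\<Gamma> + \<Delta>) \<chi> \<Longrightarrow> msupp supp C L \<Delta> \<Longrightarrow> seq_supp C (K + L) \<Gamma> \<chi>"
proof (induction \<Delta> arbitrary: K L)
  case empty
  then show ?case by simp
next
  case (add a \<Delta>)
  then obtain L1 L2 where "L = L1 + L2" "supp C L1 a" "msupp supp C L2 \<Delta>"
    by (auto simp: msupp_add_mset)
  with add.prems(1) have "seq_supp C (K + L1) (\<Gamma> + \<Delta>) \<chi>"
    by (auto intro: seq_supp_cut)
  with add.IH \<open>msupp supp C L2 \<Delta>\<close> have "seq_supp C (K + L1 + L2) \<Gamma> \<chi>"
    by blast
  with \<open>L = L1 + L2\<close> show ?case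
    by (simp add: ac_simps)
qed

lemma elim_supp_intro: "G \<in> Gs \<Longrightarrow> msupp supp C L G \<Longrightarrow> elim_supp Gs C L"
  unfolding elim_supp_def
proof (intro allI impI)
  fix E N p
  assume "G \<in> Gs" "msupp supp C L G" "C \<subseteq> E" "\<forall>G\<in>Gs. seq_supp E N G (Atom p)"
  then have "seq_supp E N ({#} + G) (Atom p)" and "msupp supp E L G"
    by (simp_all add: msupp_supp_mono)
  then have "seq_supp E (N + L) {#} (Atom p)"
    by (rule seq_supp_cut_msupp)
  then show "deriv E (L + N) p"
    by (simp add: ac_simps)
qed

lemma supp_Bang_promote:
  assumes "msupp supp C L (image_mset Bang \<Delta>)"
    and "\<And>D. C \<subseteq> D \<Longrightarrow> \<forall>d\<in>#\<Delta>. supp D {#} d \<Longrightarrow> supp D {#} \<phi>"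
  shows "supp C L (Bang \<phi>)"
  unfolding supp_Bang elim_supp_def
proof (intro allI impI)
  fix E N p
  assume "C \<subseteq> E" and "\<forall>G\<in>{{#Bang \<phi>#}}. seq_supp E N G (Atom p)"
  with assms(2) have "seq_supp E N ({#} + image_mset Bang \<Delta>) (Atom p)"
    by (auto simp: seq_supp_def hyps_image_Bang)
  with assms(1) \<open>C \<subseteq> E\<close> have "seq_supp E (N + L) {#} (Atom p)"
    by (blast intro: seq_supp_cut_msupp msupp_supp_mono)
  then show "deriv E (L + N) p"
    by (simp add: ac_simps)
qed

lemma seq_supp_weaken: "supp C K \<psi> \<Longrightarrow> seq_supp C K {#Bang \<phi>#} \<psi>"
  by (auto simp: seq_supp_def intro: supp_mono)

lemma seq_supp_contract: "seq_supp C K {#Bang \<phi>, Bang \<phi>#} \<psi> \<Longrightarrow> seq_supp C K {#Bang \<phi>#} \<psi>"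
  by (simp add: seq_supp_def)

lemma seq_supp_dereliction: "seq_supp C K {#\<phi>#} \<psi> \<Longrightarrow> seq_supp C K {#Bang \<phi>#} \<psi>"
  unfolding seq_supp_def[of C K "{#Bang \<phi>#}"]
proof (intro allI impI)
  fix D M
  assume "seq_supp C K {#\<phi>#} \<psi>" "C \<subseteq> D" "hyps supp D M {#Bang \<phi>#}"
  then have "seq_supp D K (add_mset \<phi> {#}) \<psi>" "supp D M \<phi>"
    by (auto intro: seq_supp_mono)
  then show "supp D (K + M) \<psi>"
    using seq_supp_cut by fastforce
qed

text \<open>\<^const>\<open>valid\<close>, with the case split of \<^const>\<open>ante\<close> on the empty antecedent
  removed.\<close>
definition entails :: "'a form multiset \<Rightarrow> 'a form \<Rightarrow> bool" where
  "entails \<Gamma> \<phi> \<longleftrightarrow> (\<forall>C K. hyps supp C K \<Gamma> \<longrightarrow> supp C K \<phi>)"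

lemma entailsD: "entails \<Gamma> \<phi> \<Longrightarrow> hyps supp C K \<Gamma> \<Longrightarrow> supp C K \<phi>"
  by (simp add: entails_def)

lemma entails_union_intro:
  "(\<And>C K1 K2. hyps supp C K1 \<Gamma> \<Longrightarrow> hyps supp C K2 \<Delta> \<Longrightarrow> supp C (K1 + K2) \<phi>)
    \<Longrightarrow> entails (\<Gamma> + \<Delta>) \<phi>"
  by (auto simp: entails_def hyps_union)

lemma entails_seq_supp: "entails (\<Delta> + \<Gamma>) \<chi> \<Longrightarrow> hyps supp C K \<Delta> \<Longrightarrow> seq_supp C K \<Gamma> \<chi>"
  unfolding entails_def seq_supp_def by (meson hyps_mono hyps_union)

lemma valid_if_entails: "entails \<Gamma> \<phi> \<Longrightarrow> valid \<Gamma> \<phi>"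
  unfolding valid_def ante_supp_def ante_def entails_def by auto

lemma entails_single: "entails {#\<phi>#} \<phi>"
  unfolding entails_def
proof (intro allI impI)
  fix C K
  assume hyps: "hyps supp C K {#\<phi>#}"
  show "supp C K \<phi>"
  proof (cases "is_bang \<phi>")
    case True
    then obtain d where "\<phi> = Bang d"
      by (auto simp: is_bang_def)
    with hyps show ?thesis
      by (auto intro: supp_Bang_promote[where \<Delta> = "{#}"] supp_mono)
  next
    case False
    with hyps show ?thesis
      by (auto simp: hyps_add_mset_nonbang)
  qed
qed

lemma msupp_conclusions:
  "(\<And>x. x \<in> set xs \<Longrightarrow> entails (fst x) (f x)) \<Longrightarrow> hyps supp C K (sum_list (map fst xs))
    \<Longrightarrow> msupp supp C K (mset (map f xs))"
proof (induction xs arbitrary: K)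
  case Nil
  then show ?case by simp
next
  case (Cons x xs)
  then obtain K1 K2 where "K = K1 + K2" "hyps supp C K1 (fst x)" "hyps supp C K2 (sum_list (map fst xs))"
    by (auto simp: hyps_union)
  moreover have "supp C K1 (f x)"
    using entailsD[OF Cons.prems(1) \<open>hyps supp C K1 (fst x)\<close>] by simp
  moreover have "msupp supp C K2 (mset (map f xs))"
    using Cons \<open>hyps supp C K2 (sum_list (map fst xs))\<close> by simp
  ultimately show ?case
    by (auto simp: msupp_add_mset)
qed

lemma entails_if_nd: "nd \<Gamma> \<phi> \<Longrightarrow> entails \<Gamma> \<phi>"
proof (induction rule: nd.induct)
  case (Ax \<phi>)
  show ?case by (rule entails_single)
next
  case (LolliI \<Gamma> \<phi> \<psi>)
  then show ?case
    by (auto simp: entails_def supp_Lolli intro: entails_seq_supp)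
next
  case (LolliE \<Gamma> \<phi> \<psi> \<Delta>)
  show ?case
  proof (rule entails_union_intro)
    fix C K1 K2
    assume "hyps supp C K1 \<Gamma>" "hyps supp C K2 \<Delta>"
    with LolliE.IH have "seq_supp C K1 (add_mset \<phi> {#}) \<psi>" "supp C K2 \<phi>"
      by (auto simp: supp_Lolli dest: entailsD)
    then show "supp C (K1 + K2) \<psi>"
      using seq_supp_cut by fastforce
  qed
next
  case (TensorI \<Gamma> \<phi> \<Delta> \<psi>)
  show ?case
  proof (rule entails_union_intro)
    fix C K1 K2
    assume "hyps supp C K1 \<Gamma>" "hyps supp C K2 \<Delta>"
    with TensorI.IH have "msupp supp C (K1 + K2) {#\<phi>, \<psi>#}"
      by (auto simp: msupp_add_mset dest: entailsD)
    then show "supp C (K1 + K2) (Tensor \<phi> \<psi>)"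
      by (auto simp: supp_Tensor intro: elim_supp_intro)
  qed
next
  case (TensorE \<Gamma> \<phi> \<psi> \<Delta> \<chi>)
  show ?case
  proof (rule entails_union_intro)
    fix C K1 K2
    assume "hyps supp C K1 \<Gamma>" "hyps supp C K2 \<Delta>"
    then have "elim_supp {{#\<phi>, \<psi>#}} C K1" and "seq_supp C K2 {#\<phi>, \<psi>#} \<chi>"
      using entailsD[OF TensorE.IH(1)] entails_seq_supp[OF TensorE.IH(2)] by (simp_all add: supp_Tensor)
    then show "supp C (K1 + K2) \<chi>"
      by (auto intro: supp_elim)
  qed
next
  case OneI
  show ?case
    by (auto simp: entails_def supp_One intro: elim_supp_intro)
next
  case (OneE \<Gamma> \<Delta> \<phi>)
  show ?case
  proof (rule entails_union_intro)
    fix C K1 K2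
    assume "hyps supp C K1 \<Gamma>" "hyps supp C K2 \<Delta>"
    with OneE.IH have "elim_supp {{#}} C K1" "seq_supp C K2 {#} \<phi>"
      by (auto simp: supp_One dest: entailsD)
    then show "supp C (K1 + K2) \<phi>"
      by (auto intro: supp_elim)
  qed
next
  case (WithI \<Gamma> \<phi> \<psi>)
  then show ?case by (simp add: entails_def)
next
  case (WithE1 \<Gamma> \<phi> \<psi>)
  then show ?case by (simp add: entails_def)
next
  case (WithE2 \<Gamma> \<phi> \<psi>)
  then show ?case by (simp add: entails_def)
next
  case (PlusI1 \<Gamma> \<phi> \<psi>)
  then show ?case
    by (auto simp: entails_def supp_Plus intro: elim_supp_intro[of "{#\<phi>#}"])
next
  case (PlusI2 \<Gamma> \<psi> \<phi>)
  then show ?case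
    by (auto simp: entails_def supp_Plus intro: elim_supp_intro[of "{#\<psi>#}"])
next
  case (PlusE \<Gamma> \<phi> \<psi> \<Delta> \<chi>)
  show ?case
  proof (rule entails_union_intro)
    fix C K1 K2
    assume "hyps supp C K1 \<Gamma>" "hyps supp C K2 \<Delta>"
    then have "elim_supp {{#\<phi>#}, {#\<psi>#}} C K1"
      and "seq_supp C K2 {#\<phi>#} \<chi>" "seq_supp C K2 {#\<psi>#} \<chi>"
      using entailsD[OF PlusE.IH(1)] entails_seq_supp[OF PlusE.IH(2)] entails_seq_supp[OF PlusE.IH(3)]
      by (simp_all add: supp_Plus)
    then show "supp C (K1 + K2) \<chi>"
      by (auto intro: supp_elim)
  qed
next
  case (TopI ps)
  show ?case by (simp add: entails_def)
next
  case (ZeroE ps \<Delta> \<chi>)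
  show ?case
  proof (rule entails_union_intro)
    fix C K1 K2
    assume "hyps supp C K2 \<Delta>"
    with ZeroE.IH have "elim_supp {} C K2"
      by (auto simp: supp_Zero dest: entailsD)
    then have "supp C (K2 + K1) \<chi>"
      by (auto intro: supp_elim)
    then show "supp C (K1 + K2) \<chi>"
      by (simp add: ac_simps)
  qed
next
  case (Prom ps \<phi>)
  have bangs: "mset (map (\<lambda>x. Bang (snd x)) ps) = image_mset Bang (mset (map snd ps))"
    by (induction ps) auto
  show ?case
    unfolding entails_def
  proof (intro allI impI)
    fix C K
    assume "hyps supp C K (sum_list (map fst ps))"
    moreover have "entails (fst x) (Bang (snd x))" if "x \<in> set ps" for x
      using Prom.IH(1) that by (auto simp: in_set_conv_nth)
    ultimately have "msupp supp C K (image_mset Bang (mset (map snd ps)))"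
      unfolding bangs[symmetric] by (intro msupp_conclusions)
    moreover have "supp D {#} \<phi>" if "\<forall>d\<in>#mset (map snd ps). supp D {#} d" for D
      using Prom.IH(2) that unfolding entails_def bangs hyps_image_Bang by blast
    ultimately show "supp C K (Bang \<phi>)"
      by (rule supp_Bang_promote)
  qed
next
  case (Der \<Gamma> \<phi> \<Delta> \<psi>)
  show ?case
  proof (rule entails_union_intro)
    fix C K1 K2
    assume "hyps supp C K1 \<Gamma>" "hyps supp C K2 \<Delta>"
    then have "elim_supp {{#Bang \<phi>#}} C K1" and "seq_supp C K2 {#Bang \<phi>#} \<psi>"
      using entailsD[OF Der.IH(1)] seq_supp_dereliction[OF entails_seq_supp[OF Der.IH(2)]]
      by (simp_all add: supp_Bang)
    then show "supp C (K1 + K2) \<psi>"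
      by (auto intro: supp_elim)
  qed
next
  case (Wk \<Gamma> \<phi> \<Delta> \<psi>)
  show ?case
  proof (rule entails_union_intro)
    fix C K1 K2
    assume "hyps supp C K1 \<Gamma>" "hyps supp C K2 \<Delta>"
    with Wk.IH have "elim_supp {{#Bang \<phi>#}} C K1" "seq_supp C K2 {#Bang \<phi>#} \<psi>"
      by (auto simp: supp_Bang dest: entailsD intro: seq_supp_weaken)
    then show "supp C (K1 + K2) \<psi>"
      by (auto intro: supp_elim)
  qed
next
  case (Ctr \<Gamma> \<phi> \<Delta> \<psi>)
  show ?case
  proof (rule entails_union_intro)
    fix C K1 K2
    assume "hyps supp C K1 \<Gamma>" "hyps supp C K2 \<Delta>"
    then have "elim_supp {{#Bang \<phi>#}} C K1" and "seq_supp C K2 {#Bang \<phi>#} \<psi>"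
      using entailsD[OF Ctr.IH(1)] seq_supp_contract[OF entails_seq_supp[OF Ctr.IH(2)]]
      by (simp_all add: supp_Bang)
    then show "supp C (K1 + K2) \<psi>"
      by (auto intro: supp_elim)
  qed
qed

theorem theorem6:
  fixes \<Gamma> :: "'a form multiset" and \<phi> :: "'a form"
  assumes "nd \<Gamma> \<phi>"
  shows "valid \<Gamma> \<phi>"
  using assms by (intro valid_if_entails entails_if_nd)

end
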